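(* Let $X$ be a real or complex Banach space, $(A(n))_{n\in\mathbb{N}}$ a sequence in $\mathcal{B}(X)$, and $P:\mathbb{N}\to\mathcal{B}(X)$ a family of projections compatible with the system $x_{n+1}=A(n)x_n$, with complementary family $Q(n)=I-P(n)$. Then the system is $P$-nonuniformly exponentially dichotomic if and only if there exist a constant $d>0$ and a sequence of real numbers $S:\mathbb{N}\to(0,\infty)$ such that \[ \sum_{j=n}^{\infty}e^{d(j-n)}\|\mathcal{A}_P(j,p)x\|+\sum_{k=n}^{m}e^{d(m-k)}\|\mathcal{A}_Q(k,n)x\|\le S(n)\|\mathcal{A}_P(n,p)x\|+S(m)\|\mathcal{A}_Q(m,n)x\| \] for all $(m,n,p)\in T$ and all $x\in X$.
   Context: $\mathbb{N}$ denotes the set of positive integers; $\mathcal{B}(X)$ is the Banach algebra of bounded linear operators on $X$, and $I$ is the identity operator. $\Delta=\{(m,n)\in\mathbb{N}^2: m\ge n\}$ and $T=\{(m,n,p)\in\mathbb{N}^3: m\ge n\ge p\}$. A family of projections is a map $P:\mathbb{N}\to\mathcal{B}(X)$ with $P(n)^2=P(n)$ for all $n$; its complementary family is $Q(n)=I-P(n)$. $P$ is compatible with the system $x_{n+1}=A(n)x_n$ if $A(n+1)P(n)=P(n+1)A(n+1)$ for all $n\in\mathbb{N}$. For $(m,n)\in\Delta$ define $\mathcal{A}_P(m,n)=A(m)\cdots A(n+1)P(n)$ if $m>n$ and $\mathcal{A}_P(n,n)=P(n)$; similarly $\mathcal{A}_Q(m,n)=A(m)\cdots A(n+1)Q(n)$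 if $m>n$ and $\mathcal{A}_Q(n,n)=Q(n)$. The system is $P$-nonuniformly exponentially dichotomic if there exist a constant $\alpha>0$ and a nondecreasing sequence of real numbers $N:\mathbb{N}\to(0,\infty)$ such that $e^{\alpha(m-n)}\big(\|\mathcal{A}_P(m,n)x\|+\|Q(n)x\|\big)\le N(n)\|P(n)x\|+N(m)\|\mathcal{A}_Q(m,n)x\|$ for all $(m,n)\in\Delta$, $x\in X$. *)

theory Defs
  imports "HOL-Analysis.Analysis"
begin

text \<open>Indices range over the positive integers; we use nat with explicit guards n \<ge> 1.
  transA A n k = A(n+k) o ... o A(n+1)  (identity for k = 0).\<close>

fun transA :: "(nat \<Rightarrow> 'a::real_normed_vector \<Rightarrow>\<^sub>L 'a) \<Rightarrow> nat \<Rightarrow> nat \<Rightarrow> 'a \<Rightarrow>\<^sub>L 'a" where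
  "transA A n 0 = id_blinfun"
| "transA A n (Suc k) = A (n + k + 1) o\<^sub>L transA A n k"

definition cocycle :: "(nat \<Rightarrow> 'a::real_normed_vector \<Rightarrow>\<^sub>L 'a) \<Rightarrow> nat \<Rightarrow> nat \<Rightarrow> 'a \<Rightarrow>\<^sub>L 'a" where
  "cocycle A m n = transA A n (m - n)"

definition compl_proj :: "(nat \<Rightarrow> 'a::real_normed_vector \<Rightarrow>\<^sub>L 'a) \<Rightarrow> nat \<Rightarrow> 'a \<Rightarrow>\<^sub>L 'a" where
  "compl_proj P n = id_blinfun - P n"

definition calA_P :: "(nat \<Rightarrow> 'a::real_normed_vector \<Rightarrow>\<^sub>L 'a) \<Rightarrow> (nat \<Rightarrow> 'a \<Rightarrow>\<^sub>L 'a) \<Rightarrow> nat \<Rightarrow> nat \<Rightarrow> 'a \<Rightarrow>\<^sub>L 'a" where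
  "calA_P A P m n = cocycle A m n o\<^sub>L P n"

definition calA_Q :: "(nat \<Rightarrow> 'a::real_normed_vector \<Rightarrow>\<^sub>L 'a) \<Rightarrow> (nat \<Rightarrow> 'a \<Rightarrow>\<^sub>L 'a) \<Rightarrow> nat \<Rightarrow> nat \<Rightarrow> 'a \<Rightarrow>\<^sub>L 'a" where
  "calA_Q A P m n = cocycle A m n o\<^sub>L compl_proj P n"

definition is_projection_family :: "(nat \<Rightarrow> 'a::real_normed_vector \<Rightarrow>\<^sub>L 'a) \<Rightarrow> bool" where
  "is_projection_family P \<longleftrightarrow> (\<forall>n\<ge>1. P n o\<^sub>L P n = P n)"

definition compatible :: "(nat \<Rightarrow> 'a::real_normed_vector \<Rightarrow>\<^sub>L 'a) \<Rightarrow> (nat \<Rightarrow> 'a \<Rightarrow>\<^sub>L 'a) \<Rightarrow> bool" where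
  "compatible A P \<longleftrightarrow> (\<forall>n\<ge>1. A (n + 1) o\<^sub>L P n = P (n + 1) o\<^sub>L A (n + 1))"

definition P_nonuniform_exp_dichotomic ::
  "(nat \<Rightarrow> 'a::real_normed_vector \<Rightarrow>\<^sub>L 'a) \<Rightarrow> (nat \<Rightarrow> 'a \<Rightarrow>\<^sub>L 'a) \<Rightarrow> bool" where
  "P_nonuniform_exp_dichotomic A P \<longleftrightarrow>
     (\<exists>\<alpha>::real. \<alpha> > 0 \<and> (\<exists>N::nat \<Rightarrow> real.
        (\<forall>n\<ge>1. N n > 0) \<and> (\<forall>n m. 1 \<le> n \<longrightarrow> n \<le> m \<longrightarrow> N n \<le> N m) \<and>
        (\<forall>m n x. 1 \<le> n \<longrightarrow> n \<le> m \<longrightarrow>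
           exp (\<alpha> * (real m - real n)) * (norm (calA_P A P m n x) + norm (compl_proj P n x))
             \<le> N n * norm (P n x) + N m * norm (calA_Q A P m n x))))"

end

theory Submission
  imports Defs
begin

text \<open>For \<open>y\<close> in the range of \<open>P(n)\<close> the dichotomy estimate reads
  \<open>e^(\<alpha> i) \<parallel>A(n+i,n) y\<parallel> \<le> N(n) \<parallel>y\<parallel>\<close>, and for \<open>z\<close> in the kernel of \<open>P(k)\<close> it reads
  \<open>e^(\<alpha>(m-k)) \<parallel>z\<parallel> \<le> N(m) \<parallel>A(m,k) z\<parallel>\<close>. Taking \<open>y = \<A>\<^sub>P(n,p)x\<close> and \<open>z = \<A>\<^sub>Q(k,n)x\<close> and
  halving the rate, both sums are dominated by geometric series of ratio \<open>e^(-\<alpha>/2)\<close>.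
  Conversely, one term of each sum, evaluated at \<open>P(n)x\<close> and at \<open>Q(n)x\<close>, gives the two halves
  of the dichotomy estimate, and the partial sums of \<open>S\<close> provide a nondecreasing majorant.\<close>

subsection \<open>Cocycle calculus\<close>

lemma transA_add: "transA A n (a + b) = transA A (n + a) b o\<^sub>L transA A n a"
proof (induction b)
  case 0 then show ?case by (auto intro: blinfun_eqI)
next
  case (Suc b)
  show ?case by (rule blinfun_eqI) (simp add: Suc add.assoc)
qed

lemma cocycle_refl [simp]: "cocycle A n n x = x"
  unfolding cocycle_def by simp

lemma cocycle_trans:
  assumes "n \<le> k" "k \<le> m"
  shows "cocycle A m k (cocycle A k n x) = cocycle A m n x"
proof -
  have "(k - n) + (m - k) = m - n" "n + (k - n) = k" using assms by auto
  then show ?thesis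
    using transA_add[of A n "k - n" "m - k"] unfolding cocycle_def by simp
qed

lemma transA_proj_commute:
  assumes "compatible A P" "1 \<le> n"
  shows "P (n + k) (transA A n k x) = transA A n k (P n x)"
proof (induction k)
  case 0 then show ?case by simp
next
  case (Suc k)
  have "A (n + k + 1) o\<^sub>L P (n + k) = P (n + k + 1) o\<^sub>L A (n + k + 1)"
    using assms unfolding compatible_def by auto
  then have "P (n + k + 1) (A (n + k + 1) y) = A (n + k + 1) (P (n + k) y)" for y
    by (metis blinfun_apply_blinfun_compose)
  then show ?case using Suc by simp
qed

lemma cocycle_proj_commute:
  assumes "compatible A P" "1 \<le> n" "n \<le> m"
  shows "P m (cocycle A m n x) = cocycle A m n (P n x)"
  using transA_proj_commute[OF assms(1,2), of "m - n" x] assms(3) unfolding cocycle_def by simp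

subsection \<open>Projections\<close>

lemma projection_family_idem:
  assumes "is_projection_family P" "1 \<le> n"
  shows "P n (P n x) = P n x"
  using assms unfolding is_projection_family_def by (metis blinfun_apply_blinfun_compose)

lemma compl_proj_apply: "compl_proj P n x = x - P n x"
  unfolding compl_proj_def by (simp add: blinfun.diff_left)

lemma proj_compl_proj:
  assumes "is_projection_family P" "1 \<le> n"
  shows "P n (compl_proj P n x) = 0"
  using projection_family_idem[OF assms] by (simp add: compl_proj_apply blinfun.diff_right)

lemma calA_P_image:
  fixes P :: "nat \<Rightarrow> 'a::real_normed_vector \<Rightarrow>\<^sub>L 'a"
  assumes "P n y = y"
  shows "calA_P A P m n y = cocycle A m n y" "calA_Q A P m n y = 0" "compl_proj P n y = 0"
  using assms by (simp_all add: calA_P_def calA_Q_def compl_proj_apply)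

lemma calA_Q_kernel:
  fixes P :: "nat \<Rightarrow> 'a::real_normed_vector \<Rightarrow>\<^sub>L 'a"
  assumes "P n z = 0"
  shows "calA_Q A P m n z = cocycle A m n z" "calA_P A P m n z = 0" "compl_proj P n z = z"
  using assms by (simp_all add: calA_P_def calA_Q_def compl_proj_apply)

lemma calA_P_in_image:
  assumes "is_projection_family P" "compatible A P" "1 \<le> p" "p \<le> n"
  shows "P n (calA_P A P n p x) = calA_P A P n p x"
  using cocycle_proj_commute[OF assms(2-4)] projection_family_idem[OF assms(1,3)]
  by (simp add: calA_P_def)

lemma calA_Q_in_kernel:
  assumes "is_projection_family P" "compatible A P" "1 \<le> n" "n \<le> k"
  shows "P k (calA_Q A P k n x) = 0"
  using cocycle_proj_commute[OF assms(2-4)] proj_compl_proj[OF assms(1,3)]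
  by (simp add: calA_Q_def)

lemma calA_P_trans:
  assumes "is_projection_family P" "compatible A P" "1 \<le> p" "p \<le> n" "n \<le> m"
  shows "calA_P A P m n (calA_P A P n p x) = calA_P A P m p x"
proof -
  have "calA_P A P m n (calA_P A P n p x) = cocycle A m n (calA_P A P n p x)"
    by (rule calA_P_image(1)[where P = P and n = n]) (rule calA_P_in_image[OF assms(1-4)])
  then show ?thesis using cocycle_trans[OF assms(4,5)] by (simp add: calA_P_def)
qed

lemma calA_Q_trans:
  assumes "is_projection_family P" "compatible A P" "1 \<le> n" "n \<le> k" "k \<le> m"
  shows "calA_Q A P m k (calA_Q A P k n x) = calA_Q A P m n x"
proof -
  have "calA_Q A P m k (calA_Q A P k n x) = cocycle A m k (calA_Q A P k n x)"
    by (rule calA_Q_kernel(1)[where P = P and n = k]) (rule calA_Q_in_kernel[OF assms(1-4)])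
  then show ?thesis using cocycle_trans[OF assms(4,5)] by (simp add: calA_Q_def)
qed

subsection \<open>Geometric weights\<close>

lemma exp_weight_split:
  fixes d \<alpha> t f :: real
  shows "exp (d * t) * f = exp ((d - \<alpha>) * t) * (exp (\<alpha> * t) * f)"
proof -
  have "exp (d * t) = exp ((d - \<alpha>) * t) * exp (\<alpha> * t)"
    by (simp flip: exp_add add: algebra_simps)
  then show ?thesis by simp
qed

lemma exp_weighted_suminf_le:
  fixes f :: "nat \<Rightarrow> real"
  assumes "d < \<alpha>" "\<And>i. 0 \<le> f i" "\<And>i. exp (\<alpha> * real i) * f i \<le> C"
  shows "summable (\<lambda>i. exp (d * real i) * f i)"
    and "(\<Sum>i. exp (d * real i) * f i) \<le> C / (1 - exp (d - \<alpha>))"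
proof -
  define q where "q = exp (d - \<alpha>)"
  have q: "0 < q" "q < 1" using assms(1) by (auto simp: q_def)
  have geo: "summable (\<lambda>i. C * q ^ i)" "(\<Sum>i. C * q ^ i) = C / (1 - q)"
    using q by (simp_all add: summable_geometric suminf_mult suminf_geometric)
  have le: "exp (d * real i) * f i \<le> C * q ^ i" for i
  proof -
    have "exp (d * real i) * f i = exp ((d - \<alpha>) * real i) * (exp (\<alpha> * real i) * f i)"
      by (rule exp_weight_split)
    also have "exp ((d - \<alpha>) * real i) = q ^ i"
      unfolding q_def by (rule exp_of_nat2_mult)
    also have "q ^ i * (exp (\<alpha> * real i) * f i) \<le> q ^ i * C"
      using assms(3) q by (intro mult_left_mono) auto
    finally show ?thesis by (simp add: mult.commute)
  qed
  show sum: "summable (\<lambda>i. exp (d * real i) * f i)"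
    by (rule summable_comparison_test[OF _ geo(1)]) (use le assms(2) in auto)
  show "(\<Sum>i. exp (d * real i) * f i) \<le> C / (1 - exp (d - \<alpha>))"
    using suminf_le[OF le sum geo(1)] geo(2) by (simp add: q_def)
qed

lemma exp_weighted_sum_le:
  fixes g :: "nat \<Rightarrow> real"
  assumes "d < \<alpha>" "0 \<le> C" "\<And>k. n \<le> k \<Longrightarrow> k \<le> m \<Longrightarrow> exp (\<alpha> * (real m - real k)) * g k \<le> C"
  shows "(\<Sum>k=n..m. exp (d * (real m - real k)) * g k) \<le> C / (1 - exp (d - \<alpha>))"
proof -
  define q where "q = exp (d - \<alpha>)"
  have q: "0 < q" "q < 1" using assms(1) by (auto simp: q_def)
  have le: "exp (d * (real m - real k)) * g k \<le> C * q ^ (m - k)" if "k \<in> {n..m}" for k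
  proof -
    have mk: "real m - real k = real (m - k)" using that by (simp add: of_nat_diff)
    have "exp (d * (real m - real k)) * g k
        = exp ((d - \<alpha>) * (real m - real k)) * (exp (\<alpha> * (real m - real k)) * g k)"
      by (rule exp_weight_split)
    also have "exp ((d - \<alpha>) * (real m - real k)) = q ^ (m - k)"
      unfolding q_def mk by (rule exp_of_nat2_mult)
    also have "q ^ (m - k) * (exp (\<alpha> * (real m - real k)) * g k) \<le> q ^ (m - k) * C"
      using assms(3) that q by (intro mult_left_mono) auto
    finally show ?thesis by (simp add: mult.commute)
  qed
  have "(\<Sum>k=n..m. q ^ (m - k)) = (\<Sum>j\<in>(\<lambda>k. m - k) ` {n..m}. q ^ j)"
    by (rule sum.reindex[symmetric, unfolded comp_def]) (auto simp: inj_on_def)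
  also have "\<dots> \<le> (\<Sum>i. q ^ i)"
    using q by (intro sum_le_suminf summable_geometric) auto
  finally have geom: "(\<Sum>k=n..m. q ^ (m - k)) \<le> 1 / (1 - q)" using q by (simp add: suminf_geometric)
  have "(\<Sum>k=n..m. exp (d * (real m - real k)) * g k) \<le> (\<Sum>k=n..m. C * q ^ (m - k))"
    by (rule sum_mono) (rule le)
  also have "\<dots> = C * (\<Sum>k=n..m. q ^ (m - k))" by (simp add: sum_distrib_left)
  also have "\<dots> \<le> C / (1 - q)" using mult_left_mono[OF geom assms(2)] by simp
  finally show ?thesis by (simp add: q_def)
qed

subsection \<open>The two estimates\<close>

definition dichotomy_estimate ::
  "(nat \<Rightarrow> 'a::real_normed_vector \<Rightarrow>\<^sub>L 'a) \<Rightarrow> (nat \<Rightarrow> 'a \<Rightarrow>\<^sub>L 'a) \<Rightarrow> real \<Rightarrow> (nat \<Rightarrow> real) \<Rightarrow> bool" where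
  "dichotomy_estimate A P \<alpha> N \<longleftrightarrow> (\<forall>m n x. 1 \<le> n \<longrightarrow> n \<le> m \<longrightarrow>
     exp (\<alpha> * (real m - real n)) * (norm (calA_P A P m n x) + norm (compl_proj P n x))
       \<le> N n * norm (P n x) + N m * norm (calA_Q A P m n x))"

definition summation_estimate ::
  "(nat \<Rightarrow> 'a::real_normed_vector \<Rightarrow>\<^sub>L 'a) \<Rightarrow> (nat \<Rightarrow> 'a \<Rightarrow>\<^sub>L 'a) \<Rightarrow> real \<Rightarrow> (nat \<Rightarrow> real) \<Rightarrow> bool" where
  "summation_estimate A P d S \<longleftrightarrow> (\<forall>m n p x. 1 \<le> p \<longrightarrow> p \<le> n \<longrightarrow> n \<le> m \<longrightarrow>
     summable (\<lambda>i. exp (d * real i) * norm (calA_P A P (n + i) p x)) \<and>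
     (\<Sum>i. exp (d * real i) * norm (calA_P A P (n + i) p x))
       + (\<Sum>k=n..m. exp (d * (real m - real k)) * norm (calA_Q A P k n x))
     \<le> S n * norm (calA_P A P n p x) + S m * norm (calA_Q A P m n x))"

lemma dichotomy_estimateD:
  assumes "dichotomy_estimate A P \<alpha> N" "1 \<le> n" "n \<le> m"
  shows "exp (\<alpha> * (real m - real n)) * (norm (calA_P A P m n x) + norm (compl_proj P n x))
    \<le> N n * norm (P n x) + N m * norm (calA_Q A P m n x)"
  using assms unfolding dichotomy_estimate_def by blast

lemma dichotomy_estimate_image:
  assumes "dichotomy_estimate A P \<alpha> N" "1 \<le> n" "P n y = y"
  shows "exp (\<alpha> * real i) * norm (cocycle A (n + i) n y) \<le> N n * norm y"
proof -
  have "exp (\<alpha> * (real (n + i) - real n)) * (norm (calA_P A P (n + i) n y) + norm (compl_proj P n y))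
      \<le> N n * norm (P n y) + N (n + i) * norm (calA_Q A P (n + i) n y)"
    using dichotomy_estimateD[OF assms(1,2), of "n + i" y] by simp
  then show ?thesis using calA_P_image[where P = P and n = n, OF assms(3)] assms(3) by simp
qed

lemma dichotomy_estimate_kernel:
  assumes "dichotomy_estimate A P \<alpha> N" "1 \<le> k" "k \<le> m" "P k z = 0"
  shows "exp (\<alpha> * (real m - real k)) * norm z \<le> N m * norm (cocycle A m k z)"
proof -
  have "exp (\<alpha> * (real m - real k)) * norm z
      \<le> exp (\<alpha> * (real m - real k)) * (norm (calA_P A P m k z) + norm (compl_proj P k z))"
    using calA_Q_kernel[where P = P and n = k, OF assms(4)] by simp
  also have "\<dots> \<le> N m * norm (cocycle A m k z)"
    using dichotomy_estimateD[OF assms(1-3), of z] calA_Q_kernel[where P = P and n = k, OF assms(4)]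
      assms(4) by simp
  finally show ?thesis .
qed

lemma dichotomy_imp_summation_estimate:
  assumes "is_projection_family P" "compatible A P" "dichotomy_estimate A P \<alpha> N"
    and "0 < \<alpha>" "\<forall>n\<ge>1. N n > 0"
  shows "summation_estimate A P (\<alpha> / 2) (\<lambda>n. N n / (1 - exp (- (\<alpha> / 2))))"
  unfolding summation_estimate_def
proof (intro allI impI conjI)
  fix m n p :: nat and x :: 'a
  assume p: "1 \<le> p" "p \<le> n" and nm: "n \<le> m"
  have d: "\<alpha> / 2 < \<alpha>" "\<alpha> / 2 - \<alpha> = - (\<alpha> / 2)" using assms(4) by auto
  have stable: "exp (\<alpha> * real i) * norm (calA_P A P (n + i) p x) \<le> N n * norm (calA_P A P n p x)" for i
  proof -
    have "calA_P A P (n + i) n (calA_P A P n p x) = cocycle A (n + i) n (calA_P A P n p x)"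
      by (rule calA_P_image(1)[where P = P and n = n]) (rule calA_P_in_image[OF assms(1,2) p])
    then show ?thesis
      using dichotomy_estimate_image[OF assms(3) _ calA_P_in_image[OF assms(1,2) p], of i]
        calA_P_trans[OF assms(1,2) p, of "n + i" x] p by simp
  qed
  have unstable: "exp (\<alpha> * (real m - real k)) * norm (calA_Q A P k n x) \<le> N m * norm (calA_Q A P m n x)"
    if "n \<le> k" "k \<le> m" for k
  proof -
    have n: "1 \<le> n" using p by simp
    have "calA_Q A P m k (calA_Q A P k n x) = cocycle A m k (calA_Q A P k n x)"
      by (rule calA_Q_kernel(1)[where P = P and n = k]) (rule calA_Q_in_kernel[OF assms(1,2) n that(1)])
    then show ?thesis
      using dichotomy_estimate_kernel[OF assms(3) _ that(2) calA_Q_in_kernel[OF assms(1,2) n that(1)]]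
        calA_Q_trans[OF assms(1,2) n that] n that by simp
  qed
  have "N m \<ge> 0" using assms(5) p nm by (meson less_imp_le order_trans)
  then have "N m * norm (calA_Q A P m n x) \<ge> 0" by simp
  show "summable (\<lambda>i. exp (\<alpha> / 2 * real i) * norm (calA_P A P (n + i) p x))"
    using exp_weighted_suminf_le(1)[OF d(1) norm_ge_zero stable] .
  have "(\<Sum>i. exp (\<alpha> / 2 * real i) * norm (calA_P A P (n + i) p x))
      \<le> N n / (1 - exp (- (\<alpha> / 2))) * norm (calA_P A P n p x)"
    using exp_weighted_suminf_le(2)[OF d(1) norm_ge_zero stable] unfolding d(2) by simp
  moreover have "(\<Sum>k=n..m. exp (\<alpha> / 2 * (real m - real k)) * norm (calA_Q A P k n x))
      \<le> N m / (1 - exp (- (\<alpha> / 2))) * norm (calA_Q A P m n x)"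
    using exp_weighted_sum_le[where n = n and m = m, OF d(1) \<open>N m * norm (calA_Q A P m n x) \<ge> 0\<close>
        unstable] unfolding d(2) by simp
  ultimately show "(\<Sum>i. exp (\<alpha> / 2 * real i) * norm (calA_P A P (n + i) p x))
       + (\<Sum>k=n..m. exp (\<alpha> / 2 * (real m - real k)) * norm (calA_Q A P k n x))
     \<le> N n / (1 - exp (- (\<alpha> / 2))) * norm (calA_P A P n p x)
       + N m / (1 - exp (- (\<alpha> / 2))) * norm (calA_Q A P m n x)"
    by (rule add_mono)
qed

lemma summation_imp_dichotomy_estimate:
  assumes "is_projection_family P" "summation_estimate A P d S" "\<And>n. 1 \<le> n \<Longrightarrow> S n \<le> N n"
  shows "dichotomy_estimate A P d N"
  unfolding dichotomy_estimate_def
proof (intro allI impI)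
  fix m n :: nat and x :: 'a
  assume n: "1 \<le> n" and nm: "n \<le> m"
  define i where "i = m - n"
  have mi: "m = n + i" and ri: "real m - real n = real i" using nm by (simp_all add: i_def of_nat_diff)
  have series: "summable (\<lambda>j. exp (d * real j) * norm (calA_P A P (n + j) n y))"
    and est: "(\<Sum>j. exp (d * real j) * norm (calA_P A P (n + j) n y))
       + (\<Sum>k=n..m. exp (d * (real m - real k)) * norm (calA_Q A P k n y))
     \<le> S n * norm (calA_P A P n n y) + S m * norm (calA_Q A P m n y)" for y
    using assms(2) n nm unfolding summation_estimate_def by blast+
  have PP: "P n (P n x) = P n x" and PQ: "P n (compl_proj P n x) = 0"
    using projection_family_idem[OF assms(1) n] proj_compl_proj[OF assms(1) n] by auto
  have stable: "exp (d * real i) * norm (calA_P A P m n x) \<le> S n * norm (P n x)"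
  proof -
    have "exp (d * real i) * norm (calA_P A P (n + i) n (P n x))
        \<le> (\<Sum>j. exp (d * real j) * norm (calA_P A P (n + j) n (P n x)))"
      using sum_le_suminf[OF series, of "{i}"] by simp
    moreover have "0 \<le> (\<Sum>k=n..m. exp (d * (real m - real k)) * norm (calA_Q A P k n (P n x)))"
      by (intro sum_nonneg) auto
    ultimately show ?thesis
      using est[of "P n x"] calA_P_image[where P = P and n = n, OF PP] mi PP by (simp add: calA_P_def)
  qed
  have unstable: "exp (d * real i) * norm (compl_proj P n x) \<le> S m * norm (calA_Q A P m n x)"
  proof -
    have "0 \<le> (\<Sum>j. exp (d * real j) * norm (calA_P A P (n + j) n (compl_proj P n x)))"
      by (intro suminf_nonneg series) auto
    moreover have "exp (d * (real m - real n)) * norm (calA_Q A P n n (compl_proj P n x))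
        \<le> (\<Sum>k=n..m. exp (d * (real m - real k)) * norm (calA_Q A P k n (compl_proj P n x)))"
      using nm by (intro member_le_sum) auto
    ultimately show ?thesis
      using est[of "compl_proj P n x"] calA_Q_kernel[where P = P and n = n, OF PQ] ri
      by (simp add: calA_Q_def)
  qed
  have "exp (d * (real m - real n)) * (norm (calA_P A P m n x) + norm (compl_proj P n x))
      \<le> S n * norm (P n x) + S m * norm (calA_Q A P m n x)"
    using stable unstable ri by (simp add: distrib_left)
  also have "\<dots> \<le> N n * norm (P n x) + N m * norm (calA_Q A P m n x)"
    using assms(3) n nm by (intro add_mono mult_right_mono) auto
  finally show "exp (d * (real m - real n)) * (norm (calA_P A P m n x) + norm (compl_proj P n x))
      \<le> N n * norm (P n x) + N m * norm (calA_Q A P m n x)" .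
qed

lemma positive_nondecreasing_majorant:
  fixes S :: "nat \<Rightarrow> real"
  assumes "\<forall>n\<ge>1. S n > 0"
  obtains N where "\<forall>n\<ge>1. N n > 0" "\<forall>n m. 1 \<le> n \<longrightarrow> n \<le> m \<longrightarrow> N n \<le> N m"
    "\<And>n. 1 \<le> n \<Longrightarrow> S n \<le> N n"
proof
  define N where "N n = (\<Sum>k=1..n. S k)" for n
  show le: "S n \<le> N n" if "1 \<le> n" for n
    unfolding N_def using that assms by (intro member_le_sum) auto
  show "\<forall>n\<ge>1. N n > 0" using le assms by force
  show "\<forall>n m. 1 \<le> n \<longrightarrow> n \<le> m \<longrightarrow> N n \<le> N m"
    unfolding N_def using assms by (intro allI impI sum_mono2) (auto intro: less_imp_le)
qed

theorem mainTheorem1: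
  fixes A P :: "nat \<Rightarrow> 'a::banach \<Rightarrow>\<^sub>L 'a"
  assumes "is_projection_family P"
    and "compatible A P"
  shows "P_nonuniform_exp_dichotomic A P \<longleftrightarrow>
    (\<exists>d::real. d > 0 \<and> (\<exists>S::nat \<Rightarrow> real. (\<forall>n\<ge>1. S n > 0) \<and>
      (\<forall>m n p x. 1 \<le> p \<longrightarrow> p \<le> n \<longrightarrow> n \<le> m \<longrightarrow>
         summable (\<lambda>i. exp (d * real i) * norm (calA_P A P (n + i) p x)) \<and>
         (\<Sum>i. exp (d * real i) * norm (calA_P A P (n + i) p x))
           + (\<Sum>k=n..m. exp (d * (real m - real k)) * norm (calA_Q A P k n x))
         \<le> S n * norm (calA_P A P n p x) + S m * norm (calA_Q A P m n x))))"
  unfolding P_nonuniform_exp_dichotomic_def summation_estimate_def[symmetric]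
    dichotomy_estimate_def[symmetric]
proof
  assume "\<exists>\<alpha>>0. \<exists>N. (\<forall>n\<ge>1. N n > 0) \<and> (\<forall>n m. 1 \<le> n \<longrightarrow> n \<le> m \<longrightarrow> N n \<le> N m)
    \<and> dichotomy_estimate A P \<alpha> N"
  then obtain \<alpha> N where \<alpha>: "0 < \<alpha>" and N: "\<forall>n\<ge>1. N n > 0" "dichotomy_estimate A P \<alpha> N"
    by blast
  show "\<exists>d>0. \<exists>S. (\<forall>n\<ge>1. S n > 0) \<and> summation_estimate A P d S"
  proof (intro exI conjI)
    show "\<alpha> / 2 > 0" using \<alpha> by simp
    show "\<forall>n\<ge>1. N n / (1 - exp (- (\<alpha> / 2))) > 0" using \<alpha> N by simp
    show "summation_estimate A P (\<alpha> / 2) (\<lambda>n. N n / (1 - exp (- (\<alpha> / 2))))"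
      using dichotomy_imp_summation_estimate[OF assms N(2) \<alpha> N(1)] .
  qed
next
  assume "\<exists>d>0. \<exists>S. (\<forall>n\<ge>1. S n > 0) \<and> summation_estimate A P d S"
  then obtain d S where d: "0 < d" and S: "\<forall>n\<ge>1. S n > 0" "summation_estimate A P d S"
    by blast
  obtain N where N: "\<forall>n\<ge>1. N n > 0" "\<forall>n m. 1 \<le> n \<longrightarrow> n \<le> m \<longrightarrow> N n \<le> N m"
    "\<And>n. 1 \<le> n \<Longrightarrow> S n \<le> N n"
    using positive_nondecreasing_majorant[OF S(1)] by blast
  show "\<exists>\<alpha>>0. \<exists>N. (\<forall>n\<ge>1. N n > 0) \<and> (\<forall>n m. 1 \<le> n \<longrightarrow> n \<le> m \<longrightarrow> N n \<le> N m)
    \<and> dichotomy_estimate A P \<alpha> N"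
    using d N summation_imp_dichotomy_estimate[OF assms(1) S(2) N(3)] by blast
qed

end
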